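(* Let $\tau_L, \sigma_L, \delta_L \in \mathbb{R}$ and suppose the matrix $$C = \begin{bmatrix} \tau_L & 1 & 0 \\ -\sigma_L & 0 & 1 \\ \delta_L & 0 & 0 \end{bmatrix}$$ has eigenvalues $\lambda_1 < \lambda_2 < \lambda_3 < 0$. Then for the linear system $\dot y = C y$, the forward orbit $\phi(t)$ of any point $\phi(0) = (0,0,z)$ with $z < 0$ satisfies $\phi_1(t) < 0$ for all $t > 0$.
   Context: Here $y = (y_1,y_2,y_3) \in \mathbb{R}^3$ and $\phi(t) = (\phi_1(t),\phi_2(t),\phi_3(t))$; the initial points considered are those on the line $\{y_1 = y_2 = 0\}$ with negative third coordinate. *)

theory Defs
  imports "HOL-Analysis.Analysis"
begin

definition Cmat :: "real \<Rightarrow> real \<Rightarrow> real \<Rightarrow> real^3^3" where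
  "Cmat \<tau> \<sigma> \<delta> = vector [vector [\<tau>, 1, 0], vector [-\<sigma>, 0, 1], vector [\<delta>, 0, 0]]"

definition real_eigenvalues :: "real^'n^'n \<Rightarrow> real set" where
  "real_eigenvalues A = {\<mu>. \<exists>v. v \<noteq> 0 \<and> A *v v = \<mu> *\<^sub>R v}"

end

theory Submission
  imports Defs
begin

text \<open>Each eigenvalue \<open>\<lambda>\<close> of \<open>C\<close> gives the left eigenvector \<open>(\<lambda>\<^sup>2, \<lambda>, 1)\<close>, so
  \<open>\<lambda>\<^sup>2 \<phi>\<^sub>1 + \<lambda> \<phi>\<^sub>2 + \<phi>\<^sub>3 = z e\<^bsup>\<lambda>t\<^esup>\<close> along the orbit. Read for the three eigenvalues, this says that
  \<open>\<phi>\<^sub>1(t)\<close> is the leading coefficient of the quadratic interpolating \<open>\<lambda> \<mapsto> z e\<^bsup>\<lambda>t\<^esup>\<close> at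
  \<open>\<lambda>\<^sub>1, \<lambda>\<^sub>2, \<lambda>\<^sub>3\<close>, i.e. \<open>z\<close> times a second divided difference of the strictly convex
  function \<open>\<lambda> \<mapsto> e\<^bsup>\<lambda>t\<^esup>\<close>. Hence \<open>\<phi>\<^sub>1(t) < 0\<close>.\<close>

lemma Cmat_mult_vec:
  "Cmat \<tau> \<sigma> \<delta> *v x = vector [\<tau> * x$1 + x$2, - \<sigma> * x$1 + x$3, \<delta> * x$1]"
  by (simp add: Cmat_def matrix_vector_mult_def sum_3 vec_eq_iff forall_3)

lemma real_eigenvalue_Cmat_root:
  assumes "l \<in> real_eigenvalues (Cmat \<tau> \<sigma> \<delta>)"
  shows "l^3 = \<tau> * l^2 - \<sigma> * l + \<delta>"
proof -
  obtain v where "v \<noteq> 0" and v: "Cmat \<tau> \<sigma> \<delta> *v v = l *\<^sub>R v"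
    using assms unfolding real_eigenvalues_def by blast
  have e1: "v$2 = (l - \<tau>) * v$1"
    and e2: "v$3 = l * v$2 + \<sigma> * v$1"
    and e3: "\<delta> * v$1 = l * v$3"
    using v by (auto simp: Cmat_mult_vec vec_eq_iff forall_3 algebra_simps)
  have "v$1 \<noteq> 0"
  proof
    assume "v$1 = 0"
    with e1 e2 have "v = 0" by (simp add: vec_eq_iff forall_3)
    with \<open>v \<noteq> 0\<close> show False ..
  qed
  moreover have "\<delta> * v$1 = (l^3 - \<tau> * l^2 + \<sigma> * l) * v$1"
    using e3 unfolding e2 e1 by (simp add: algebra_simps power2_eq_square power3_eq_cube)
  ultimately show ?thesis by simp
qed

lemma left_eigenvector_Cmat:
  assumes "l^3 = \<tau> * l^2 - \<sigma> * l + \<delta>"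
  shows "vector [l^2, l, 1] \<bullet> (Cmat \<tau> \<sigma> \<delta> *v x) = l * (vector [l^2, l, 1] \<bullet> x)"
proof -
  have "vector [l^2, l, 1] \<bullet> (Cmat \<tau> \<sigma> \<delta> *v x)
      = (\<tau> * l^2 - \<sigma> * l + \<delta>) * x$1 + l^2 * x$2 + l * x$3"
    by (simp add: Cmat_mult_vec inner_vec_def sum_3 algebra_simps)
  also have "\<dots> = l * (vector [l^2, l, 1] \<bullet> x)"
    unfolding assms[symmetric]
    by (simp add: inner_vec_def sum_3 algebra_simps power2_eq_square power3_eq_cube)
  finally show ?thesis .
qed

lemma left_eigen_component_exp:
  fixes A :: "'a::real_inner \<Rightarrow> 'a" and \<phi> :: "real \<Rightarrow> 'a"
  assumes left_eigen: "\<And>x. w \<bullet> A x = l * (w \<bullet> x)"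
    and ode: "\<And>t. t \<ge> 0 \<Longrightarrow> (\<phi> has_vector_derivative A (\<phi> t)) (at t within {0..})"
    and "t \<ge> 0"
  shows "w \<bullet> \<phi> t = exp (l * t) * (w \<bullet> \<phi> 0)"
proof -
  have deriv: "((\<lambda>s. w \<bullet> \<phi> s) has_real_derivative l * (w \<bullet> \<phi> s)) (at s within {0..})"
    if "s \<ge> 0" for s
    using bounded_linear.has_vector_derivative[OF bounded_linear_inner_right ode[OF that], of w]
    by (simp add: left_eigen has_real_derivative_iff_has_vector_derivative)
  have "((\<lambda>s. exp (- (l * s)) * (w \<bullet> \<phi> s)) has_real_derivative 0) (at s within {0..})"
    if "s \<in> {0..}" for s
    using that deriv[of s]
    by (auto intro!: derivative_eq_intros simp: algebra_simps)
  then obtain c where "\<forall>s\<in>{0..}. exp (- (l * s)) * (w \<bullet> \<phi> s) = c"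
    using has_field_derivative_zero_constant[OF convex_real_interval(1)] by blast
  then have "exp (- (l * t)) * (w \<bullet> \<phi> t) = w \<bullet> \<phi> 0"
    using \<open>t \<ge> 0\<close> by force
  then show ?thesis by (simp add: exp_minus field_simps)
qed

lemma exp_scaled_secant_slopes_increasing:
  fixes a b c t :: real
  assumes "a < b" "b < c" "t > 0"
  shows "(exp (b * t) - exp (a * t)) / (b - a) < (exp (c * t) - exp (b * t)) / (c - b)"
proof -
  have deriv: "DERIV (\<lambda>x. exp (x * t)) x :> t * exp (x * t)" for x
    by (auto intro!: derivative_eq_intros)
  obtain x where x: "x < b" "exp (b * t) - exp (a * t) = (b - a) * (t * exp (x * t))"
    using MVT2[OF \<open>a < b\<close> deriv] by blast
  obtain y where y: "b < y" "exp (c * t) - exp (b * t) = (c - b) * (t * exp (y * t))"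
    using MVT2[OF \<open>b < c\<close> deriv] by blast
  have "t * exp (x * t) < t * exp (y * t)"
    using x(1) y(1) \<open>t > 0\<close> by simp
  with x y assms show ?thesis by simp
qed

lemma quadratic_interpolation_leading_coeff:
  fixes l1 l2 l3 :: real
  assumes "l1 < l2" "l2 < l3"
    and "a * l1^2 + b * l1 + c = f1" "a * l2^2 + b * l2 + c = f2" "a * l3^2 + b * l3 + c = f3"
  shows "(l3 - l1) * a = (f3 - f2) / (l3 - l2) - (f2 - f1) / (l2 - l1)"
proof -
  have "(l2 + l1) * a + b = (f2 - f1) / (l2 - l1)" "(l3 + l2) * a + b = (f3 - f2) / (l3 - l2)"
    using assms by (auto simp: field_simps power2_eq_square)
  then show ?thesis by (simp add: algebra_simps)
qed

theorem lemmaB1: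
  fixes \<tau> \<sigma> \<delta> l1 l2 l3 z :: real and \<phi> :: "real \<Rightarrow> real^3"
  assumes eig: "real_eigenvalues (Cmat \<tau> \<sigma> \<delta>) = {l1, l2, l3}"
    and ord: "l1 < l2" "l2 < l3" "l3 < 0"
    and init: "\<phi> 0 = vector [0, 0, z]" and z: "z < 0"
    and ode: "\<And>t. t \<ge> 0 \<Longrightarrow> (\<phi> has_vector_derivative (Cmat \<tau> \<sigma> \<delta> *v \<phi> t)) (at t within {0..})"
  shows "\<forall>t>0. \<phi> t $ 1 < 0"
proof (intro allI impI)
  fix t :: real assume "t > 0"
  have orbit: "\<phi> t$1 * l^2 + \<phi> t$2 * l + \<phi> t$3 = z * exp (l * t)" if "l \<in> {l1, l2, l3}" for l
  proof -
    have "l^3 = \<tau> * l^2 - \<sigma> * l + \<delta>"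
      using real_eigenvalue_Cmat_root[of l \<tau> \<sigma> \<delta>] that unfolding eig by blast
    from left_eigen_component_exp[OF left_eigenvector_Cmat[OF this] ode less_imp_le[OF \<open>t > 0\<close>]]
    have "vector [l^2, l, 1] \<bullet> \<phi> t = exp (l * t) * (vector [l^2, l, 1] \<bullet> \<phi> 0)" .
    then show ?thesis by (simp add: init inner_vec_def sum_3 algebra_simps)
  qed
  define slope where "slope a b = (exp (b * t) - exp (a * t)) / (b - a)" for a b
  have "(l3 - l1) * \<phi> t$1 = z * (slope l2 l3 - slope l1 l2)"
    using quadratic_interpolation_leading_coeff[OF ord(1,2) orbit orbit orbit]
    by (simp add: slope_def right_diff_distrib)
  moreover have "slope l1 l2 < slope l2 l3"
    unfolding slope_def by (rule exp_scaled_secant_slopes_increasing[OF ord(1,2) \<open>t > 0\<close>])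
  ultimately have "(l3 - l1) * \<phi> t$1 < 0"
    using z by (simp add: mult_neg_pos)
  then show "\<phi> t$1 < 0"
    using ord by (simp add: mult_less_0_iff)
qed

end
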